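(* Let $0<p_1\le p_2\le1$ and let $X_1,X_2,Y_1,Y_2$ be independent random variables with $X_1$ geometric with success probability $p_1$, $X_2$ geometric with success probability $p_2$, and $Y_1,Y_2$ geometric with success probability $(p_1+p_2)/2$. Let $Z$ be a random variable taking nonnegative integer values, independent of $X_1,X_2,Y_1,Y_2$. Then for every positive integer $j$, $$\mathbb{P}(Z+X_1+X_2>j)\ge\mathbb{P}(Z+Y_1+Y_2>j).$$
   Context: A random variable $Y$ is geometric with success probability $p$ if $\mathbb{P}(Y=s)=(1-p)^{s-1}p$ for $s=1,2,\dots$. *)

theory Defs
  imports "HOL-Probability.Probability"
begin

definition geometric_rv :: "'a measure \<Rightarrow> real \<Rightarrow> ('a \<Rightarrow> nat) \<Rightarrow> bool" where
  "geometric_rv M p Y \<longleftrightarrow>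
     Y \<in> measurable M (count_space UNIV) \<and>
     (\<forall>s::nat. s \<ge> 1 \<longrightarrow> measure M {\<omega> \<in> space M. Y \<omega> = s} = (1 - p) ^ (s - 1) * p)"

end

theory Submission
  imports Defs
begin

text \<open>
  Conditioning on \<open>Z\<close> reduces the claim to the case \<open>Z = 0\<close>, i.e.\ to comparing the
  tails of \<open>X\<^sub>1 + X\<^sub>2\<close> and \<open>Y\<^sub>1 + Y\<^sub>2\<close>. With failure probabilities \<open>q\<^sub>i = 1 - p\<^sub>i\<close> and
  \<open>m = (q\<^sub>1 + q\<^sub>2) / 2\<close>, the tail \<open>T(k) = P(X\<^sub>1 + X\<^sub>2 > k)\<close> satisfies the recursion
  \<open>T(k+1) = m T(k) + ((1 - q\<^sub>1) q\<^sub>2\<^sup>k + (1 - q\<^sub>2) q\<^sub>1\<^sup>k) / 2\<close>, while for the symmetric pair the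
  inhomogeneous term is \<open>(1 - m) m\<^sup>k\<close>. Convexity of \<open>x \<mapsto> x\<^sup>k\<close> and \<open>q\<^sub>1\<^sup>k \<ge> m\<^sup>k\<close> make the
  first term dominate the second, so the tails compare by induction on \<open>k\<close>.
\<close>

text \<open>\<open>geom2_tail q\<^sub>1 q\<^sub>2 k = P(V + W > k)\<close> for independent geometric \<open>V\<close>, \<open>W\<close> with failure
  probabilities \<open>q\<^sub>1\<close>, \<open>q\<^sub>2\<close>: either \<open>V > k\<close>, or \<open>V = i + 1 \<le> k\<close> and \<open>W > k - i - 1\<close>.\<close>
definition geom2_tail :: "real \<Rightarrow> real \<Rightarrow> nat \<Rightarrow> real" where
  "geom2_tail q1 q2 k = q1 ^ k + (1 - q1) * (\<Sum>i<k. q2 ^ (k - Suc i) * q1 ^ i)"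

lemma geom2_tail_closed_form:
  "(q1 - q2) * geom2_tail q1 q2 k = q1 ^ k * (1 - q2) - q2 ^ k * (1 - q1)"
proof -
  have "(q1 - q2) * (\<Sum>i<k. q2 ^ (k - Suc i) * q1 ^ i) = q1 ^ k - q2 ^ k"
    using power_diff_sumr2[of q1 k q2] by simp
  then have "(q1 - q2) * geom2_tail q1 q2 k = (q1 - q2) * q1 ^ k + (1 - q1) * (q1 ^ k - q2 ^ k)"
    unfolding geom2_tail_def by (simp only: distrib_left mult.left_commute[of "q1 - q2" "1 - q1"])
  then show ?thesis
    by (simp add: algebra_simps)
qed

lemma geom2_tail_commute: "geom2_tail q1 q2 k = geom2_tail q2 q1 k"
proof (cases "q1 = q2")
  case False
  have "(q1 - q2) * geom2_tail q1 q2 k = (q1 - q2) * geom2_tail q2 q1 k"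
    using geom2_tail_closed_form[of q1 q2 k] geom2_tail_closed_form[of q2 q1 k]
    by (simp add: algebra_simps)
  with False show ?thesis by simp
qed simp

lemma geom2_tail_0 [simp]: "geom2_tail q1 q2 0 = 1"
  by (simp add: geom2_tail_def)

lemma geom2_tail_Suc:
  "geom2_tail q1 q2 (Suc k) = q1 * geom2_tail q1 q2 k + (1 - q1) * q2 ^ k"
proof -
  have "(\<Sum>i<Suc k. q2 ^ (Suc k - Suc i) * q1 ^ i)
      = q2 ^ k + q1 * (\<Sum>i<k. q2 ^ (k - Suc i) * q1 ^ i)"
    by (simp add: sum.lessThan_Suc_shift sum_distrib_left algebra_simps del: sum.lessThan_Suc)
  then show ?thesis
    unfolding geom2_tail_def by (simp add: algebra_simps)
qed

lemma power_midpoint_le: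
  fixes x y :: real
  assumes "0 \<le> x" "0 \<le> y"
  shows "2 * ((x + y) / 2) ^ n \<le> x ^ n + y ^ n"
proof (induction n)
  case (Suc n)
  have "0 \<le> (x ^ n - y ^ n) * (x - y)"
    using assms power_mono[of x y n] power_mono[of y x n]
    by (cases "x \<le> y") (auto intro: mult_nonpos_nonpos)
  then have "(x ^ n + y ^ n) * ((x + y) / 2) \<le> x ^ Suc n + y ^ Suc n"
    by (simp add: algebra_simps)
  moreover have "2 * ((x + y) / 2) ^ n * ((x + y) / 2) \<le> (x ^ n + y ^ n) * ((x + y) / 2)"
    using Suc assms by (intro mult_right_mono) auto
  ultimately show ?case
    by (simp only: power_Suc2 mult.assoc)
qed simp

lemma geom2_tail_midpoint_le:
  fixes x y :: real
  assumes "0 \<le> y" "y \<le> x" "x \<le> 1"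
  shows "geom2_tail ((x + y) / 2) ((x + y) / 2) k \<le> geom2_tail x y k"
proof (induction k)
  case (Suc k)
  define m where "m = (x + y) / 2"
  have m: "y \<le> m" "m \<le> x" "0 \<le> m"
    using assms by (auto simp: m_def)
  have T_Suc: "geom2_tail x y (Suc k)
      = m * geom2_tail x y k + ((1 - x) * y ^ k + (1 - y) * x ^ k) / 2"
    using geom2_tail_Suc[of x y k] geom2_tail_Suc[of y x k] geom2_tail_commute[of x y]
    by (simp add: m_def field_simps)
  have "(1 - x) * (2 * m ^ k) \<le> (1 - x) * (x ^ k + y ^ k)"
    using power_midpoint_le[of x y k] assms by (intro mult_left_mono) (auto simp: m_def)
  moreover have "(1 - x) * (x ^ k - m ^ k) \<le> (1 - y) * (x ^ k - m ^ k)"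
    using m assms power_mono[of m x k] by (intro mult_right_mono) auto
  moreover have "2 * ((1 - m) * m ^ k) = (1 - x) * m ^ k + (1 - y) * m ^ k"
    by (simp add: m_def field_simps)
  ultimately have "(1 - m) * m ^ k \<le> ((1 - x) * y ^ k + (1 - y) * x ^ k) / 2"
    by (simp add: algebra_simps)
  moreover have "m * geom2_tail m m k \<le> m * geom2_tail x y k"
    using Suc m by (simp add: m_def mult_left_mono)
  ultimately have "geom2_tail m m (Suc k) \<le> geom2_tail x y (Suc k)"
    using T_Suc geom2_tail_Suc[of m m k] by linarith
  then show ?case
    by (simp add: m_def)
qed simp

lemma geom2_tail_convolution:
  fixes f :: "nat \<Rightarrow> real"
  assumes "f 0 = 0" and "\<And>a. f (Suc a) = q1 ^ a * (1 - q1)"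
  shows "(\<Sum>a\<le>n. f a * (1 - q2 ^ (n - a))) = 1 - geom2_tail q1 q2 n"
proof (cases n)
  case (Suc n')
  have "(\<Sum>a\<le>n. f a * (1 - q2 ^ (n - a)))
      = (1 - q1) * (\<Sum>a\<le>n'. q1 ^ a) - (1 - q1) * (\<Sum>a\<le>n'. q2 ^ (n' - a) * q1 ^ a)"
    unfolding Suc
    by (simp add: assms sum.atMost_Suc_shift sum_distrib_left sum_subtractf algebra_simps
        del: sum.atMost_Suc)
  also have "\<dots> = 1 - geom2_tail q1 q2 n"
    unfolding sum_gp_basic geom2_tail_def Suc by (simp add: lessThan_Suc_atMost)
  finally show ?thesis .
qed (simp add: assms)

context prob_space
begin

lemma indep_vars_measurable:
  assumes "indep_vars M' X I" and "i \<in> I"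
  shows "X i \<in> measurable M (M' i)"
  using assms unfolding indep_vars_def2 by auto

lemma events_of_nat_rv:
  fixes X :: "'a \<Rightarrow> nat"
  assumes "X \<in> measurable M (count_space UNIV)"
  shows "{\<omega> \<in> space M. P (X \<omega>)} \<in> events"
  using measurable_sets[OF assms, of "{x. P x}"] by (simp add: vimage_def Int_def conj_commute)

lemma prob_le_eq_sum_prob_eq:
  fixes X :: "'a \<Rightarrow> nat"
  assumes "X \<in> measurable M (count_space UNIV)"
  shows "prob {\<omega> \<in> space M. X \<omega> \<le> n} = (\<Sum>s\<le>n. prob {\<omega> \<in> space M. X \<omega> = s})"
proof -
  have "{\<omega> \<in> space M. X \<omega> \<le> n} = (\<Union>s\<le>n. {\<omega> \<in> space M. X \<omega> = s})"
    by auto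
  also have "prob \<dots> = (\<Sum>s\<le>n. prob {\<omega> \<in> space M. X \<omega> = s})"
    by (rule finite_measure_finite_Union)
      (auto simp: disjoint_family_on_def intro: events_of_nat_rv[OF assms])
  finally show ?thesis .
qed

lemma geometric_rv_prob_0:
  assumes geom: "geometric_rv M p X" and "0 < p" "p \<le> 1"
  shows "prob {\<omega> \<in> space M. X \<omega> = 0} = 0"
proof (rule ccontr)
  let ?P0 = "prob {\<omega> \<in> space M. X \<omega> = 0}"
  have X: "X \<in> measurable M (count_space UNIV)" and
    prob_Suc: "\<And>s. prob {\<omega> \<in> space M. X \<omega> = Suc s} = (1 - p) ^ s * p"
    using geom unfolding geometric_rv_def by auto
  have cdf: "(\<Sum>s\<le>n. prob {\<omega> \<in> space M. X \<omega> = s}) = ?P0 + 1 - (1 - p) ^ n" for n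
    by (induction n) (simp_all add: prob_Suc algebra_simps)
  assume "?P0 \<noteq> 0"
  then have "?P0 > 0"
    using measure_nonneg[of M] by (simp add: order_less_le)
  then obtain n where "(1 - p) ^ n < ?P0"
    using real_arch_pow_inv[of ?P0 "1 - p"] assms by auto
  moreover have "prob {\<omega> \<in> space M. X \<omega> \<le> n} \<le> 1"
    by (rule prob_le_1)
  ultimately show False
    using cdf[of n] prob_le_eq_sum_prob_eq[OF X, of n] by simp
qed

lemma geometric_rv_prob_le:
  assumes geom: "geometric_rv M p X" and "0 < p" "p \<le> 1"
  shows "prob {\<omega> \<in> space M. X \<omega> \<le> n} = 1 - (1 - p) ^ n"
proof -
  have X: "X \<in> measurable M (count_space UNIV)"
    using geom unfolding geometric_rv_def by auto
  have "(\<Sum>s\<le>n. prob {\<omega> \<in> space M. X \<omega> = s}) = 1 - (1 - p) ^ n"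
    using geom geometric_rv_prob_0[OF assms]
    by (induction n) (simp_all add: geometric_rv_def algebra_simps)
  then show ?thesis
    using prob_le_eq_sum_prob_eq[OF X] by simp
qed

lemma indep_vars_prob_eq3:
  fixes X :: "'i \<Rightarrow> 'a \<Rightarrow> nat"
  assumes ind: "indep_vars (\<lambda>_. count_space UNIV) X I"
    and I: "i \<in> I" "k \<in> I" "l \<in> I" "distinct [i, k, l]"
  shows "prob {\<omega> \<in> space M. X i \<omega> = a \<and> X k \<omega> = b \<and> X l \<omega> = c}
       = prob {\<omega> \<in> space M. X i \<omega> = a} * prob {\<omega> \<in> space M. X k \<omega> = b}
         * prob {\<omega> \<in> space M. X l \<omega> = c}"
proof -
  define v where "v j = (if j = i then a else if j = k then b else c)" for j
  have "prob (\<Inter>j\<in>{i, k, l}. X j -` {v j} \<inter> space M)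
      = (\<Prod>j\<in>{i, k, l}. prob (X j -` {v j} \<inter> space M))"
    using I by (intro indep_varsD[OF ind]) auto
  moreover have "X j -` {v j} \<inter> space M = {\<omega> \<in> space M. X j \<omega> = v j}" for j
    by auto
  moreover have "(\<Inter>j\<in>{i, k, l}. {\<omega> \<in> space M. X j \<omega> = v j})
      = {\<omega> \<in> space M. X i \<omega> = a \<and> X k \<omega> = b \<and> X l \<omega> = c}"
    using I by (auto simp: v_def)
  moreover have "v i = a" "v k = b" "v l = c"
    using I by (auto simp: v_def)
  ultimately show ?thesis
    using I by (simp add: mult.assoc)
qed

lemma prob_sum3_le_eq:
  fixes X :: "'i \<Rightarrow> 'a \<Rightarrow> nat"
  assumes ind: "indep_vars (\<lambda>_. count_space UNIV) X I"
    and I: "i \<in> I" "k \<in> I" "l \<in> I" "distinct [i, k, l]"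
  shows "prob {\<omega> \<in> space M. X i \<omega> + X k \<omega> + X l \<omega> \<le> j}
       = (\<Sum>z\<le>j. prob {\<omega> \<in> space M. X i \<omega> = z} *
           (\<Sum>a\<le>j - z. prob {\<omega> \<in> space M. X k \<omega> = a} *
             (\<Sum>b\<le>j - z - a. prob {\<omega> \<in> space M. X l \<omega> = b})))"
proof -
  define S where "S = (SIGMA z:{..j}. SIGMA a:{..j - z}. {..j - z - a})"
  define B where "B t = {\<omega> \<in> space M. X i \<omega> = fst t \<and> X k \<omega> = fst (snd t) \<and> X l \<omega> = snd (snd t)}"
    for t
  define g where "g z a b = prob {\<omega> \<in> space M. X i \<omega> = z} * prob {\<omega> \<in> space M. X k \<omega> = a}
      * prob {\<omega> \<in> space M. X l \<omega> = b}" for z a b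
  have "{\<omega> \<in> space M. X i \<omega> + X k \<omega> + X l \<omega> \<le> j} = (\<Union>t\<in>S. B t)"
    by (force simp: S_def B_def)
  also have "prob \<dots> = (\<Sum>t\<in>S. prob (B t))"
  proof (rule finite_measure_finite_Union)
    show "B ` S \<subseteq> events"
      using I unfolding B_def
      by (auto intro!: sets.sets_Collect_conj events_of_nat_rv indep_vars_measurable[OF ind])
  qed (auto simp: S_def B_def disjoint_family_on_def)
  also have "\<dots> = (\<Sum>(z, a, b)\<in>S. g z a b)"
    using indep_vars_prob_eq3[OF ind I] by (intro sum.cong) (auto simp: B_def g_def)
  also have "\<dots> = (\<Sum>z\<le>j. \<Sum>a\<le>j - z. \<Sum>b\<le>j - z - a. g z a b)"
    unfolding S_def by (simp add: sum.Sigma split_def)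
  finally show ?thesis
    unfolding g_def by (simp only: sum_distrib_left mult.assoc)
qed

lemma prob_sum3_geometric_gt:
  fixes X :: "'i \<Rightarrow> 'a \<Rightarrow> nat"
  assumes ind: "indep_vars (\<lambda>_. count_space UNIV) X I"
    and I: "i \<in> I" "k \<in> I" "l \<in> I" "distinct [i, k, l]"
    and geom: "geometric_rv M pa (X k)" "geometric_rv M pb (X l)"
    and p: "0 < pa" "pa \<le> 1" "0 < pb" "pb \<le> 1"
  shows "prob {\<omega> \<in> space M. j < X i \<omega> + X k \<omega> + X l \<omega>}
       = 1 - (\<Sum>z\<le>j. prob {\<omega> \<in> space M. X i \<omega> = z} * (1 - geom2_tail (1 - pa) (1 - pb) (j - z)))"
proof -
  have pair: "(\<Sum>a\<le>n. prob {\<omega> \<in> space M. X k \<omega> = a} *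
        (\<Sum>b\<le>n - a. prob {\<omega> \<in> space M. X l \<omega> = b})) = 1 - geom2_tail (1 - pa) (1 - pb) n" for n
  proof -
    have "(\<Sum>b\<le>m. prob {\<omega> \<in> space M. X l \<omega> = b}) = 1 - (1 - pb) ^ m" for m
      using geometric_rv_prob_le[OF geom(2) p(3,4)]
        prob_le_eq_sum_prob_eq[OF indep_vars_measurable[OF ind I(3)]] by simp
    moreover have "prob {\<omega> \<in> space M. X k \<omega> = Suc a} = (1 - pa) ^ a * (1 - (1 - pa))" for a
      using geom(1) unfolding geometric_rv_def by simp
    ultimately show ?thesis
      using geometric_rv_prob_0[OF geom(1) p(1,2)] by (simp add: geom2_tail_convolution)
  qed
  have "{\<omega> \<in> space M. j < X i \<omega> + X k \<omega> + X l \<omega>}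
      = space M - {\<omega> \<in> space M. X i \<omega> + X k \<omega> + X l \<omega> \<le> j}"
    by auto
  moreover have "{\<omega> \<in> space M. X i \<omega> + X k \<omega> + X l \<omega> \<le> j} \<in> events"
    using I indep_vars_measurable[OF ind] by (intro events_of_nat_rv) auto
  ultimately show ?thesis
    using prob_sum3_le_eq[OF ind I, of j, unfolded pair] by (simp add: prob_compl)
qed

end

theorem corollaryB4:
  fixes M :: "'a measure" and p1 p2 :: real
    and Z X1 X2 Y1 Y2 :: "'a \<Rightarrow> nat"
  assumes "prob_space M"
    and "0 < p1" and "p1 \<le> p2" and "p2 \<le> 1"
    and "geometric_rv M p1 X1" and "geometric_rv M p2 X2"
    and "geometric_rv M ((p1 + p2) / 2) Y1" and "geometric_rv M ((p1 + p2) / 2) Y2"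
    and "prob_space.indep_vars M (\<lambda>_. count_space UNIV)
           (\<lambda>i. [Z, X1, X2, Y1, Y2] ! i) {0..<5}"
  shows "\<forall>j::nat. j \<ge> 1 \<longrightarrow>
           measure M {\<omega> \<in> space M. Z \<omega> + X1 \<omega> + X2 \<omega> > j}
             \<ge> measure M {\<omega> \<in> space M. Z \<omega> + Y1 \<omega> + Y2 \<omega> > j}"
proof (intro allI impI)
  \<comment> \<open>The inequality holds for every \<open>j\<close>.\<close>
  fix j :: nat
  interpret prob_space M by fact
  have X: "prob {\<omega> \<in> space M. j < Z \<omega> + X1 \<omega> + X2 \<omega>}
      = 1 - (\<Sum>z\<le>j. prob {\<omega> \<in> space M. Z \<omega> = z} * (1 - geom2_tail (1 - p1) (1 - p2) (j - z)))"
    using prob_sum3_geometric_gt[OF assms(9), of 0 1 2 p1 p2 j] assms(2-6) by simp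
  have Y: "prob {\<omega> \<in> space M. j < Z \<omega> + Y1 \<omega> + Y2 \<omega>}
      = 1 - (\<Sum>z\<le>j. prob {\<omega> \<in> space M. Z \<omega> = z} *
              (1 - geom2_tail ((1 - p1 + (1 - p2)) / 2) ((1 - p1 + (1 - p2)) / 2) (j - z)))"
    using prob_sum3_geometric_gt[OF assms(9), of 0 3 4 "(p1 + p2) / 2" "(p1 + p2) / 2" j]
      assms(2-4,7,8) by (simp add: field_simps)
  show "prob {\<omega> \<in> space M. j < Z \<omega> + X1 \<omega> + X2 \<omega>}
      \<ge> prob {\<omega> \<in> space M. j < Z \<omega> + Y1 \<omega> + Y2 \<omega>}"
    unfolding X Y using geom2_tail_midpoint_le[where x = "1 - p1" and y = "1 - p2"] assms(2-4)
    by (intro diff_left_mono sum_mono mult_left_mono) auto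
qed

end
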